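(* Let $M,F$ be positive integers and $\epsilon>0$, and set $B=\frac{e^\epsilon+1}{e^\epsilon-1}\cdot MF$. Consider the randomized algorithm $\mathcal{A}$ which, on input a real matrix $G\in\mathbb{R}^{M\times F}$, does the following: (1) initialize $\tilde G=0\in\mathbb{R}^{M\times F}$; (2) sample a row index $i\in\{1,\dots,M\}$ uniformly at random; (3) project the row $G^{i}$ onto $[-1,1]$, i.e. replace each entry $G^{i,f}$ by $\max(-1,\min(1,G^{i,f}))$; (4) sample a column index $f\in\{1,\dots,F\}$ uniformly at random, independently of $i$; (5) sample a Bernoulli random variable $\beta$ with $$\Pr[\beta=1]=\frac{G^{i,f}(e^\epsilon-1)+e^\epsilon+1}{2e^\epsilon+2},$$ where $G^{i,f}$ denotes the projected value from step (3); (6) if $\beta=1$ set $\tilde G^{i,f}=B$, otherwise set $\tilde G^{i,f}=-B$; (7) output $\tilde G$. Then $\mathcal{A}$ is an $\epsilon$-local randomizer: for all inputs $G,G'\in\mathbb{R}^{M\times F}$ and every possible output $Y$, $$\Pr[\mathcal{A}(G)=Y]\le e^\epsilon\cdot\Pr[\mathcal{A}(G')=Y].$$ Equivalently, $\mathcal{A}$ satisfies $\epsilon$-local differential privacy.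
   Context: A randomized algorithm $\Phi:\mathcal{U}\to\mathcal{Y}$ is an $\epsilon$-local randomizer ($\epsilon>0$) if for all inputs $x,x'\in\mathcal{U}$ and all outputs $Y$ of $\Phi$, $\Pr[\Phi(x)=Y]\le e^\epsilon\Pr[\Phi(x')=Y]$. In the paper, the input $G$ is a user's item-embedding gradient matrix with $M$ items and $F$ latent factors, and the output is a privatized report that is nonzero in exactly one entry. *)

theory Defs
  imports "HOL-Probability.Probability"
begin

text \<open>A real M x F matrix is represented as a function nat => nat => real;
  only entries with row index < M and column index < F are meaningful
  (rows/columns indexed 0..M-1, 0..F-1 instead of 1..M, 1..F).\<close>
type_synonym matrix = "nat \<Rightarrow> nat \<Rightarrow> real"

definition clip :: "real \<Rightarrow> real" where
  "clip x = max (-1) (min 1 x)"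

definition scaleB :: "nat \<Rightarrow> nat \<Rightarrow> real \<Rightarrow> real" where
  "scaleB M F \<epsilon> = (exp \<epsilon> + 1) / (exp \<epsilon> - 1) * (real M * real F)"

definition mech :: "nat \<Rightarrow> nat \<Rightarrow> real \<Rightarrow> matrix \<Rightarrow> matrix pmf" where
  "mech M F \<epsilon> G =
     bind_pmf (pmf_of_set {0..<M}) (\<lambda>i.
     bind_pmf (pmf_of_set {0..<F}) (\<lambda>f.
     bind_pmf (bernoulli_pmf ((clip (G i f) * (exp \<epsilon> - 1) + exp \<epsilon> + 1) / (2 * exp \<epsilon> + 2)))
       (\<lambda>\<beta>. return_pmf (\<lambda>a b. if a = i \<and> b = f then (if \<beta> then scaleB M F \<epsilon> else - scaleB M F \<epsilon>) else 0))))"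

definition local_randomizer :: "real \<Rightarrow> 'a set \<Rightarrow> ('a \<Rightarrow> 'b pmf) \<Rightarrow> bool" where
  "local_randomizer \<epsilon> U \<Phi> \<longleftrightarrow>
     (\<forall>x\<in>U. \<forall>x'\<in>U. \<forall>Y. pmf (\<Phi> x) Y \<le> exp \<epsilon> * pmf (\<Phi> x') Y)"

end

theory Submission
  imports Defs
begin

text \<open>Every output of the mechanism is determined by the row, the column and the bit \<open>\<beta>\<close>;
  the row and the column are drawn independently of the input, and the bit is a Bernoulli
  trial whose success probability lies in \<open>[1/(e\<^sup>\<epsilon>+1), e\<^sup>\<epsilon>/(e\<^sup>\<epsilon>+1)]\<close> because the input
  entry was clipped to \<open>[-1,1]\<close>. Any two Bernoulli distributions with parameters in that
  interval have pointwise likelihood ratio at most \<open>e\<^sup>\<epsilon>\<close>, and such a ratio bound survives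
  post-processing and mixing over a common input-independent distribution.\<close>

lemma pmf_map_le_mult:
  assumes "\<And>x. pmf p x \<le> c * pmf q x"
  shows "pmf (map_pmf h p) y \<le> c * pmf (map_pmf h q) y"
proof -
  have "pmf (map_pmf h p) y = infsetsum (pmf p) (h -` {y})"
    by (simp add: pmf_map measure_pmf_conv_infsetsum)
  also have "\<dots> \<le> infsetsum (\<lambda>x. c * pmf q x) (h -` {y})"
    using assms by (intro infsetsum_mono) auto
  also have "\<dots> = c * pmf (map_pmf h q) y"
    by (simp add: infsetsum_cmult_right[OF pmf_abs_summable] pmf_map measure_pmf_conv_infsetsum)
  finally show ?thesis .
qed

lemma pmf_bind_le_mult:
  assumes "\<And>x y. x \<in> set_pmf p \<Longrightarrow> pmf (f x) y \<le> c * pmf (g x) y"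
  shows "pmf (bind_pmf p f) y \<le> c * pmf (bind_pmf p g) y"
proof -
  have "(\<integral>x. pmf (f x) y \<partial>p) \<le> (\<integral>x. c * pmf (g x) y \<partial>p)"
    using assms
    by (intro integral_mono_AE AE_pmfI measure_pmf.integrable_const_bound[where B = 1]
          measure_pmf.integrable_const_bound[where B = "\<bar>c\<bar>"])
       (auto simp: abs_mult mult_left_le pmf_le_1)
  then show ?thesis
    by (simp add: pmf_bind)
qed

lemma pmf_bernoulli_le_mult:
  fixes e p q :: real
  defines "I \<equiv> {1 / (e + 1)..e / (e + 1)}"
  assumes "e > 0" and "p \<in> I" and "q \<in> I"
  shows "pmf (bernoulli_pmf p) b \<le> e * pmf (bernoulli_pmf q) b"
proof -
  have ratio: "r \<le> e * s" if "r \<in> I" "s \<in> I" for r s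
  proof -
    have "r \<le> e * (1 / (e + 1))"
      using that by (simp add: I_def)
    also have "\<dots> \<le> e * s"
      using that \<open>e > 0\<close> by (intro mult_left_mono) (simp_all add: I_def)
    finally show ?thesis .
  qed
  have complement: "1 - r \<in> I" if "r \<in> I" for r
    using that \<open>e > 0\<close> by (auto simp: I_def field_simps)
  have "0 \<le> 1 / (e + 1)" "e / (e + 1) \<le> 1"
    using \<open>e > 0\<close> by auto
  then have "I \<subseteq> {0..1}"
    by (auto simp: I_def)
  then have "p \<in> {0..1}" "q \<in> {0..1}"
    using \<open>p \<in> I\<close> \<open>q \<in> I\<close> by auto
  then show ?thesis
    using ratio[OF \<open>p \<in> I\<close> \<open>q \<in> I\<close>] ratio[OF complement[OF \<open>p \<in> I\<close>] complement[OF \<open>q \<in> I\<close>]]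
    by (cases b) auto
qed

lemma clip_bernoulli_param_bounds:
  fixes e :: real
  assumes "e \<ge> 1"
  shows "(clip x * (e - 1) + e + 1) / (2 * e + 2) \<in> {1 / (e + 1)..e / (e + 1)}"
proof -
  have "-1 \<le> clip x" "clip x \<le> 1"
    unfolding clip_def by auto
  then have "-1 * (e - 1) \<le> clip x * (e - 1)" "clip x * (e - 1) \<le> 1 * (e - 1)"
    using assms by (intro mult_right_mono; simp)+
  then have "2 / (2 * e + 2) \<le> (clip x * (e - 1) + e + 1) / (2 * e + 2)"
      "(clip x * (e - 1) + e + 1) / (2 * e + 2) \<le> 2 * e / (2 * e + 2)"
    using assms by (intro divide_right_mono; simp)+
  moreover have "2 / (2 * e + 2) = 1 / (e + 1)" "2 * e / (2 * e + 2) = e / (e + 1)"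
    using assms by (simp_all add: field_simps)
  ultimately show ?thesis
    by simp
qed

theorem theorem1:
  fixes M F :: nat and \<epsilon> :: real
  assumes "M > 0" and "F > 0" and "\<epsilon> > 0"
  shows "local_randomizer \<epsilon> UNIV (mech M F \<epsilon>)"
  unfolding local_randomizer_def mech_def map_pmf_def[symmetric]
  using \<open>\<epsilon> > 0\<close>
  by (intro ballI allI pmf_bind_le_mult pmf_map_le_mult pmf_bernoulli_le_mult
      clip_bernoulli_param_bounds) auto

end
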